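(* Let $(G,\omega_1)$ and $(H,\omega_2)$ be weighted locally compact groups, $1\le p<\infty$, with $L^p(G,\omega_1)$ and $L^p(H,\omega_2)$ convolution Banach algebras. Let $T:L^p(G,\omega_1)\to L^p(H,\omega_2)$ be an algebra isomorphism such that either $T$ is bipositive, or $T$ is an isometry and $p\neq 2$. Then $T$ is bicontinuous and biseparating.
   Context: A weighted locally compact group is a pair $(G,\omega)$ with $G$ locally compact and $\omega:G\to\mathbb{R}^+$ positive continuous, $\omega(xy)\le\omega(x)\omega(y)$, $\omega(e_G)=1$. $L^p(G,\omega)$ is the space of measurable $f$ with $\|f\|_{p,\omega}=\left(\int_G|f|^p\omega^p\,d\lambda\right)^{1/p}<\infty$. $f$ is positive if $f\ge0$ a.e.; $T$ is positive if $Tf\ge 0$ whenever $f\ge0$; bipositive if $T$ is a bijection with $T$ and $T^{-1}$ positive. $T$ is disjointness preserving if $f\cdot g=0$ implies $Tf\cdot Tg=0$; biseparating if it is a bijection and $T,T^{-1}$ are disjointness preserving; bicontinuous if $T,T^{-1}$ are bounded. *)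

theory Defs
  imports "HOL-Analysis.Analysis"
begin

definition lc_group ::
  "('g::t2_space \<Rightarrow> 'g \<Rightarrow> 'g) \<Rightarrow> 'g \<Rightarrow> ('g \<Rightarrow> 'g) \<Rightarrow> 'g measure \<Rightarrow> bool" where
  "lc_group gm e gi mu \<longleftrightarrow>
     (\<forall>x y z. gm (gm x y) z = gm x (gm y z)) \<and>
     (\<forall>x. gm e x = x \<and> gm x e = x) \<and>
     (\<forall>x. gm (gi x) x = e \<and> gm x (gi x) = e) \<and>
     continuous_on UNIV (\<lambda>(x, y). gm x y) \<and>
     continuous_on UNIV gi \<and>
     locally compact (UNIV :: 'g set) \<and>
     space mu = UNIV \<and> sets mu = sets borel \<and>
     (\<forall>x. \<forall>A\<in>sets borel. emeasure mu ((\<lambda>y. gm x y) ` A) = emeasure mu A) \<and>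
     (\<forall>K. compact K \<longrightarrow> emeasure mu K < \<infinity>) \<and>
     (\<forall>A\<in>sets borel. emeasure mu A = (INF U\<in>{U. open U \<and> A \<subseteq> U}. emeasure mu U)) \<and>
     (\<forall>U. open U \<longrightarrow> emeasure mu U = (SUP K\<in>{K. compact K \<and> K \<subseteq> U}. emeasure mu K)) \<and>
     emeasure mu UNIV \<noteq> 0"

definition weight :: "('g::topological_space \<Rightarrow> 'g \<Rightarrow> 'g) \<Rightarrow> 'g \<Rightarrow> ('g \<Rightarrow> real) \<Rightarrow> bool" where
  "weight gm e w \<longleftrightarrow> (\<forall>x. w x > 0) \<and> continuous_on UNIV w \<and>
     (\<forall>x y. w (gm x y) \<le> w x * w y) \<and> w e = 1"

definition weighted_lc_group ::
  "('g::t2_space \<Rightarrow> 'g \<Rightarrow> 'g) \<Rightarrow> 'g \<Rightarrow> ('g \<Rightarrow> 'g) \<Rightarrow> 'g measure \<Rightarrow> ('g \<Rightarrow> real) \<Rightarrow> bool" where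
  "weighted_lc_group gm e gi mu w \<longleftrightarrow> lc_group gm e gi mu \<and> weight gm e w"

section \<open>Weighted L^p spaces (complex-valued; elements are representatives)\<close>

definition lp_integral :: "'g measure \<Rightarrow> ('g \<Rightarrow> real) \<Rightarrow> real \<Rightarrow> ('g \<Rightarrow> complex) \<Rightarrow> ennreal" where
  "lp_integral mu w p f = (\<integral>\<^sup>+ x. ennreal ((cmod (f x) * w x) powr p) \<partial>mu)"

definition Lp_w :: "'g measure \<Rightarrow> ('g \<Rightarrow> real) \<Rightarrow> real \<Rightarrow> ('g \<Rightarrow> complex) set" where
  "Lp_w mu w p = {f. f \<in> borel_measurable mu \<and> lp_integral mu w p f < \<infinity>}"

definition lp_norm :: "'g measure \<Rightarrow> ('g \<Rightarrow> real) \<Rightarrow> real \<Rightarrow> ('g \<Rightarrow> complex) \<Rightarrow> real" where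
  "lp_norm mu w p f = (enn2real (lp_integral mu w p f)) powr (1 / p)"

definition conv_defined ::
  "('g \<Rightarrow> 'g \<Rightarrow> 'g) \<Rightarrow> ('g \<Rightarrow> 'g) \<Rightarrow> 'g measure \<Rightarrow> ('g \<Rightarrow> complex) \<Rightarrow> ('g \<Rightarrow> complex) \<Rightarrow> bool" where
  "conv_defined gm gi mu f g \<longleftrightarrow>
     (AE x in mu. integrable mu (\<lambda>y. f y * g (gm (gi y) x)))"

definition conv ::
  "('g \<Rightarrow> 'g \<Rightarrow> 'g) \<Rightarrow> ('g \<Rightarrow> 'g) \<Rightarrow> 'g measure \<Rightarrow> ('g \<Rightarrow> complex) \<Rightarrow> ('g \<Rightarrow> complex) \<Rightarrow> 'g \<Rightarrow> complex" where
  "conv gm gi mu f g = (\<lambda>x. LINT y|mu. f y * g (gm (gi y) x))"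

definition conv_banach_algebra ::
  "('g \<Rightarrow> 'g \<Rightarrow> 'g) \<Rightarrow> ('g \<Rightarrow> 'g) \<Rightarrow> 'g measure \<Rightarrow> ('g \<Rightarrow> real) \<Rightarrow> real \<Rightarrow> bool" where
  "conv_banach_algebra gm gi mu w p \<longleftrightarrow>
     (\<forall>f\<in>Lp_w mu w p. \<forall>g\<in>Lp_w mu w p.
        conv_defined gm gi mu f g \<and> conv gm gi mu f g \<in> Lp_w mu w p) \<and>
     (\<exists>C. \<forall>f\<in>Lp_w mu w p. \<forall>g\<in>Lp_w mu w p.
        lp_norm mu w p (conv gm gi mu f g) \<le> C * lp_norm mu w p f * lp_norm mu w p g)"

section \<open>Operators between L^p spaces, acting on representatives modulo a.e. equality\<close>

definition ae_eq :: "'g measure \<Rightarrow> ('g \<Rightarrow> complex) \<Rightarrow> ('g \<Rightarrow> complex) \<Rightarrow> bool" where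
  "ae_eq mu f g \<longleftrightarrow> (AE x in mu. f x = g x)"

definition nonneg_ae :: "'g measure \<Rightarrow> ('g \<Rightarrow> complex) \<Rightarrow> bool" where
  "nonneg_ae mu f \<longleftrightarrow> (AE x in mu. Im (f x) = 0 \<and> Re (f x) \<ge> 0)"

definition disjoint_ae :: "'g measure \<Rightarrow> ('g \<Rightarrow> complex) \<Rightarrow> ('g \<Rightarrow> complex) \<Rightarrow> bool" where
  "disjoint_ae mu f g \<longleftrightarrow> (AE x in mu. f x * g x = 0)"

definition algebra_iso ::
  "('g \<Rightarrow> 'g \<Rightarrow> 'g) \<Rightarrow> ('g \<Rightarrow> 'g) \<Rightarrow> 'g measure \<Rightarrow> ('g \<Rightarrow> real) \<Rightarrow>
   ('h \<Rightarrow> 'h \<Rightarrow> 'h) \<Rightarrow> ('h \<Rightarrow> 'h) \<Rightarrow> 'h measure \<Rightarrow> ('h \<Rightarrow> real) \<Rightarrow> real \<Rightarrow>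
   (('g \<Rightarrow> complex) \<Rightarrow> ('h \<Rightarrow> complex)) \<Rightarrow> bool" where
  "algebra_iso multG invG muG w1 multH invH muH w2 p T \<longleftrightarrow>
     (\<forall>f\<in>Lp_w muG w1 p. T f \<in> Lp_w muH w2 p) \<and>
     (\<forall>f\<in>Lp_w muG w1 p. \<forall>g\<in>Lp_w muG w1 p. ae_eq muG f g \<longrightarrow> ae_eq muH (T f) (T g)) \<and>
     (\<forall>f\<in>Lp_w muG w1 p. \<forall>g\<in>Lp_w muG w1 p. \<forall>a b::complex.
        ae_eq muH (T (\<lambda>x. a * f x + b * g x)) (\<lambda>y. a * T f y + b * T g y)) \<and>
     (\<forall>f\<in>Lp_w muG w1 p. \<forall>g\<in>Lp_w muG w1 p.
        ae_eq muH (T (conv multG invG muG f g)) (conv multH invH muH (T f) (T g))) \<and>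
     (\<forall>f\<in>Lp_w muG w1 p. \<forall>g\<in>Lp_w muG w1 p. ae_eq muH (T f) (T g) \<longrightarrow> ae_eq muG f g) \<and>
     (\<forall>h\<in>Lp_w muH w2 p. \<exists>f\<in>Lp_w muG w1 p. ae_eq muH (T f) h)"

definition bipositive ::
  "'g measure \<Rightarrow> ('g \<Rightarrow> real) \<Rightarrow> 'h measure \<Rightarrow> ('h \<Rightarrow> real) \<Rightarrow> real \<Rightarrow>
   (('g \<Rightarrow> complex) \<Rightarrow> ('h \<Rightarrow> complex)) \<Rightarrow> bool" where
  "bipositive muG w1 muH w2 p T \<longleftrightarrow>
     (\<forall>f\<in>Lp_w muG w1 p. nonneg_ae muG f \<longrightarrow> nonneg_ae muH (T f)) \<and>
     (\<forall>f\<in>Lp_w muG w1 p. nonneg_ae muH (T f) \<longrightarrow> nonneg_ae muG f)"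

definition isometry_lp ::
  "'g measure \<Rightarrow> ('g \<Rightarrow> real) \<Rightarrow> 'h measure \<Rightarrow> ('h \<Rightarrow> real) \<Rightarrow> real \<Rightarrow>
   (('g \<Rightarrow> complex) \<Rightarrow> ('h \<Rightarrow> complex)) \<Rightarrow> bool" where
  "isometry_lp muG w1 muH w2 p T \<longleftrightarrow>
     (\<forall>f\<in>Lp_w muG w1 p. lp_norm muH w2 p (T f) = lp_norm muG w1 p f)"

definition bicontinuous ::
  "'g measure \<Rightarrow> ('g \<Rightarrow> real) \<Rightarrow> 'h measure \<Rightarrow> ('h \<Rightarrow> real) \<Rightarrow> real \<Rightarrow>
   (('g \<Rightarrow> complex) \<Rightarrow> ('h \<Rightarrow> complex)) \<Rightarrow> bool" where
  "bicontinuous muG w1 muH w2 p T \<longleftrightarrow>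
     (\<exists>C. \<forall>f\<in>Lp_w muG w1 p. lp_norm muH w2 p (T f) \<le> C * lp_norm muG w1 p f) \<and>
     (\<exists>C. \<forall>f\<in>Lp_w muG w1 p. lp_norm muG w1 p f \<le> C * lp_norm muH w2 p (T f))"

definition biseparating ::
  "'g measure \<Rightarrow> ('g \<Rightarrow> real) \<Rightarrow> 'h measure \<Rightarrow> ('h \<Rightarrow> real) \<Rightarrow> real \<Rightarrow>
   (('g \<Rightarrow> complex) \<Rightarrow> ('h \<Rightarrow> complex)) \<Rightarrow> bool" where
  "biseparating muG w1 muH w2 p T \<longleftrightarrow>
     (\<forall>f\<in>Lp_w muG w1 p. \<forall>g\<in>Lp_w muG w1 p.
        disjoint_ae muG f g \<longrightarrow> disjoint_ae muH (T f) (T g)) \<and>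
     (\<forall>f\<in>Lp_w muG w1 p. \<forall>g\<in>Lp_w muG w1 p.
        disjoint_ae muH (T f) (T g) \<longrightarrow> disjoint_ae muG f g)"

end

(* Only the linear structure of T matters.

   Bipositive case: a positive linear map between weighted L^p spaces is bounded, by the classical
   series argument for positive operators on Banach lattices. Its inverse is positive as well, so T
   is bicontinuous; and a bipositive bijection is a lattice isomorphism, hence preserves
   disjointness in both directions.

   Isometric case (Lamperti): for p <> 2, equality in Clarkson's inequality between
   |a + b|^p + |a - b|^p and 2 (|a|^p + |b|^p) holds exactly when a b = 0. Integrating, disjointness
   of f and g is expressed by an identity between norms of f, g, f + g and f - g, which an
   isometry preserves. *)

theory Submission
  imports Defs
begin

section \<open>Clarkson and Jensen inequalities for powers\<close>

lemma powr_convex_nonneg: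
  assumes "1 \<le> q" shows "convex_on {0..} (\<lambda>x::real. x powr q)"
proof (rule convex_on_linorderI)
  fix t x y :: real
  assume t: "0 < t" "t < 1" and xy: "x \<in> {0..}" "y \<in> {0..}" "x < y"
  show "((1 - t) *\<^sub>R x + t *\<^sub>R y) powr q \<le> (1 - t) * x powr q + t * y powr q"
  proof (cases "x = 0")
    case True
    have "t powr q \<le> t"
      using powr_mono'[of 1 q t] t assms by simp
    then show ?thesis
      using True t mult_right_mono[of "t powr q" t "y powr q"] by (simp add: powr_mult)
  next
    case False
    then show ?thesis
      using convex_onD[OF powr_convex[OF assms], of t x y] t xy by simp
  qed
qed simp

lemma powr_concave_nonneg:
  assumes "0 \<le> q" "q \<le> 1" shows "concave_on {0..} (\<lambda>x::real. x powr q)"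
proof -
  have concave_pos: "concave_on {0<..} (\<lambda>x::real. x powr q)"
  proof (rule f''_le0_imp_concave[where f' = "\<lambda>x. q * x powr (q - 1)"
        and f'' = "\<lambda>x. q * ((q - 1) * x powr (q - 1 - 1))"])
    fix x :: real assume x: "x \<in> {0<..}"
    show "((\<lambda>x. x powr q) has_real_derivative q * x powr (q - 1)) (at x)"
      using x by (intro has_real_derivative_powr) auto
    show "((\<lambda>x. q * x powr (q - 1)) has_real_derivative q * ((q - 1) * x powr (q - 1 - 1))) (at x)"
      using x by (intro DERIV_cmult has_real_derivative_powr) auto
    show "q * ((q - 1) * x powr (q - 1 - 1)) \<le> 0"
      using assms x by (intro mult_nonneg_nonpos mult_nonpos_nonneg) auto
  qed simp
  show ?thesis
  proof (rule concave_on_linorderI)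
    fix t x y :: real
    assume t: "0 < t" "t < 1" and xy: "x \<in> {0..}" "y \<in> {0..}" "x < y"
    show "(1 - t) * x powr q + t * y powr q \<le> ((1 - t) *\<^sub>R x + t *\<^sub>R y) powr q"
    proof (cases "x = 0")
      case True
      have "t \<le> t powr q"
        using powr_mono'[of q 1 t] t assms by simp
      then show ?thesis
        using True t mult_right_mono[of t "t powr q" "y powr q"] by (simp add: powr_mult)
    next
      case False
      then show ?thesis
        using concave_onD[OF concave_pos, of t x y] t xy by simp
    qed
  qed simp
qed

lemma powr_midpoint_le:
  fixes x y q :: real
  assumes "1 \<le> q" "0 \<le> x" "0 \<le> y"
  shows "2 * ((x + y) / 2) powr q \<le> x powr q + y powr q"
  using convex_onD[OF powr_convex_nonneg[OF assms(1)], of "1/2" x y] assms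
  by (simp add: field_simps)

lemma powr_midpoint_ge:
  fixes x y q :: real
  assumes "0 \<le> q" "q \<le> 1" "0 \<le> x" "0 \<le> y"
  shows "x powr q + y powr q \<le> 2 * ((x + y) / 2) powr q"
  using concave_onD[OF powr_concave_nonneg[OF assms(1,2)], of "1/2" x y] assms
  by (simp add: field_simps)

lemma powr_superadditive_strict:
  fixes s t q :: real
  assumes "0 < s" "0 < t" "1 < q"
  shows "s powr q + t powr q < (s + t) powr q"
proof -
  have "s * s powr (q - 1) + t * t powr (q - 1) < s * (s + t) powr (q - 1) + t * (s + t) powr (q - 1)"
    using assms by (intro add_strict_mono mult_strict_left_mono powr_less_mono2) auto
  then show ?thesis
    using assms by (simp add: powr_mult_base distrib_right[symmetric])
qed

lemma powr_subadditive_strict: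
  fixes s t q :: real
  assumes "0 < s" "0 < t" "q < 1"
  shows "(s + t) powr q < s powr q + t powr q"
proof -
  have "s * (s + t) powr (q - 1) + t * (s + t) powr (q - 1) < s * s powr (q - 1) + t * t powr (q - 1)"
    using assms by (intro add_strict_mono mult_strict_left_mono powr_less_mono2_neg) auto
  then show ?thesis
    using assms by (simp add: powr_mult_base distrib_right[symmetric])
qed

lemma powr_superadditive:
  fixes s t q :: real
  assumes "0 \<le> s" "0 \<le> t" "1 \<le> q"
  shows "s powr q + t powr q \<le> (s + t) powr q"
  using powr_superadditive_strict[of s t q] assms by (cases "s = 0 \<or> t = 0 \<or> q = 1") auto

lemma powr_subadditive:
  fixes s t q :: real
  assumes "0 \<le> s" "0 \<le> t" "q \<le> 1"
  shows "(s + t) powr q \<le> s powr q + t powr q"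
  using powr_subadditive_strict[of s t q] assms by (cases "s = 0 \<or> t = 0 \<or> q = 1") auto

lemma cmod_parallelogram: "((cmod (a + b))\<^sup>2 + (cmod (a - b))\<^sup>2) / 2 = (cmod a)\<^sup>2 + (cmod b)\<^sup>2"
  unfolding cmod_power2 by (simp add: power2_eq_square algebra_simps)

lemma cmod_powr_eq_square_powr: "cmod z powr p = ((cmod z)\<^sup>2) powr (p / 2)"
proof (cases "z = 0")
  case False
  then have "((cmod z)\<^sup>2) powr (p / 2) = (cmod z powr 2) powr (p / 2)"
    by (simp add: powr_realpow)
  also have "\<dots> = cmod z powr p"
    unfolding powr_powr by simp
  finally show ?thesis ..
qed simp

text \<open>Writing \<open>q = p/2\<close>, the numbers \<open>|a \<plusminus> b|\<^sup>2\<close> have the same mean as \<open>|a|\<^sup>2\<close> and \<open>|b|\<^sup>2\<close>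
  by the parallelogram law, so Clarkson's inequalities come from the convexity (\<open>q \<ge> 1\<close>)
  or concavity (\<open>q \<le> 1\<close>) of \<open>x powr q\<close> combined with its super- or subadditivity.\<close>

lemma clarkson_ge:
  fixes a b :: complex
  assumes "2 \<le> p"
  shows "2 * (cmod a powr p + cmod b powr p) \<le> cmod (a + b) powr p + cmod (a - b) powr p"
proof -
  have "2 * ((cmod a)\<^sup>2 powr (p/2) + (cmod b)\<^sup>2 powr (p/2)) \<le> 2 * ((cmod a)\<^sup>2 + (cmod b)\<^sup>2) powr (p/2)"
    using powr_superadditive[of "(cmod a)\<^sup>2" "(cmod b)\<^sup>2" "p/2"] assms by simp
  also have "\<dots> \<le> (cmod (a + b))\<^sup>2 powr (p/2) + (cmod (a - b))\<^sup>2 powr (p/2)"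
    using powr_midpoint_le[of "p/2" "(cmod (a + b))\<^sup>2" "(cmod (a - b))\<^sup>2", unfolded cmod_parallelogram] assms
    by simp
  finally show ?thesis
    unfolding cmod_powr_eq_square_powr[of _ p] .
qed

lemma clarkson_le:
  fixes a b :: complex
  assumes "0 \<le> p" "p \<le> 2"
  shows "cmod (a + b) powr p + cmod (a - b) powr p \<le> 2 * (cmod a powr p + cmod b powr p)"
proof -
  have "(cmod (a + b))\<^sup>2 powr (p/2) + (cmod (a - b))\<^sup>2 powr (p/2) \<le> 2 * ((cmod a)\<^sup>2 + (cmod b)\<^sup>2) powr (p/2)"
    using powr_midpoint_ge[of "p/2" "(cmod (a + b))\<^sup>2" "(cmod (a - b))\<^sup>2", unfolded cmod_parallelogram] assms
    by simp
  also have "\<dots> \<le> 2 * ((cmod a)\<^sup>2 powr (p/2) + (cmod b)\<^sup>2 powr (p/2))"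
    using powr_subadditive[of "(cmod a)\<^sup>2" "(cmod b)\<^sup>2" "p/2"] assms by simp
  finally show ?thesis
    unfolding cmod_powr_eq_square_powr[of _ p] .
qed

lemma clarkson_eq_imp_mult_eq_0:
  fixes a b :: complex
  assumes "0 < p" "p \<noteq> 2"
    and eq: "cmod (a + b) powr p + cmod (a - b) powr p = 2 * (cmod a powr p + cmod b powr p)"
  shows "a * b = 0"
proof (rule ccontr)
  assume "a * b \<noteq> 0"
  define q x y s t where "q = p / 2" and "x = (cmod (a + b))\<^sup>2" and "y = (cmod (a - b))\<^sup>2"
    and "s = (cmod a)\<^sup>2" and "t = (cmod b)\<^sup>2"
  have pos: "0 < s" "0 < t"
    using \<open>a * b \<noteq> 0\<close> by (auto simp: s_def t_def)
  have mean: "(x + y) / 2 = s + t"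
    unfolding x_def y_def s_def t_def by (rule cmod_parallelogram)
  have eq': "x powr q + y powr q = 2 * (s powr q + t powr q)"
    using eq unfolding cmod_powr_eq_square_powr[of _ p] q_def x_def y_def s_def t_def .
  show False
  proof (cases "2 < p")
    case True
    then have "2 * (s powr q + t powr q) < 2 * (s + t) powr q"
      using powr_superadditive_strict[OF pos, of q] by (simp add: q_def)
    also have "\<dots> \<le> x powr q + y powr q"
      using powr_midpoint_le[of q x y] True unfolding mean by (simp add: q_def x_def y_def)
    finally show False
      using eq' by simp
  next
    case False
    have "x powr q + y powr q \<le> 2 * (s + t) powr q"
      using powr_midpoint_ge[of q x y] assms False unfolding mean by (simp add: q_def x_def y_def)
    also have "\<dots> < 2 * (s powr q + t powr q)"
      using powr_subadditive_strict[OF pos, of q] False assms by (simp add: q_def)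
    finally show False
      using eq' by simp
  qed
qed

lemma powr_sum_le_sum_powr:
  fixes a z :: "'i \<Rightarrow> real"
  assumes "finite I" "1 \<le> p" "\<And>i. i \<in> I \<Longrightarrow> 0 \<le> a i" "\<And>i. i \<in> I \<Longrightarrow> 0 \<le> z i"
    and "sum a I \<le> 1"
  shows "(\<Sum>i\<in>I. a i * z i) powr p \<le> (\<Sum>i\<in>I. a i * z i powr p)"
proof (cases "sum a I = 0")
  case True
  then have "\<forall>i\<in>I. a i = 0"
    using sum_nonneg_eq_0_iff[OF assms(1)] assms(3) by blast
  then show ?thesis
    by simp
next
  case False
  define s where "s = sum a I"
  have s: "0 < s" "s \<le> 1"
    using False assms(3,5) sum_nonneg[of I a] by (auto simp: s_def)
  have "(\<Sum>i\<in>I. (a i / s) *\<^sub>R z i) powr p \<le> (\<Sum>i\<in>I. a i / s * z i powr p)"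
    using s False assms
    by (intro convex_on_sum[OF _ _ powr_convex_nonneg]) (auto simp: s_def simp flip: sum_divide_distrib)
  then have "s powr p * (\<Sum>i\<in>I. a i * z i / s) powr p \<le> s powr p * (\<Sum>i\<in>I. a i * z i powr p / s)"
    by (simp add: mult_left_mono)
  moreover have "s powr p * (\<Sum>i\<in>I. a i * z i / s) powr p = (\<Sum>i\<in>I. a i * z i) powr p"
    using s assms by (simp add: sum_nonneg flip: sum_divide_distrib powr_mult)
  moreover have "s powr p * (\<Sum>i\<in>I. a i * z i powr p / s) = s powr (p - 1) * (\<Sum>i\<in>I. a i * z i powr p)"
    using s by (simp add: powr_diff flip: sum_divide_distrib)
  moreover have "s powr (p - 1) * (\<Sum>i\<in>I. a i * z i powr p) \<le> (\<Sum>i\<in>I. a i * z i powr p)"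
    using s assms powr_mono2[of "p - 1" s 1] by (intro mult_left_le_one_le sum_nonneg) auto
  ultimately show ?thesis
    by linarith
qed

lemma powr_suminf_le_suminf_powr:
  fixes a z :: "nat \<Rightarrow> real"
  assumes "1 \<le> p" "\<And>n. 0 \<le> a n" "summable a" "suminf a \<le> 1" "\<And>n. 0 \<le> z n"
    and summable_powr: "summable (\<lambda>n. a n * z n powr p)"
  shows "summable (\<lambda>n. a n * z n)" and "(\<Sum>n. a n * z n) powr p \<le> (\<Sum>n. a n * z n powr p)"
proof -
  have "a n * z n \<le> a n + a n * z n powr p" for n
  proof (cases "z n \<le> 1")
    case True
    have "0 \<le> a n * z n powr p"
      using assms(2)[of n] by simp
    then show ?thesis
      using assms(2,5)[of n] mult_left_le[of "z n" "a n"] True by linarith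
  next
    case False
    then have "z n \<le> z n powr p"
      using powr_mono[of 1 p "z n"] assms(1) by simp
    then show ?thesis
      using assms(2)[of n] mult_left_mono[of "z n" "z n powr p" "a n"] by simp
  qed
  then show summable: "summable (\<lambda>n. a n * z n)"
    using assms by (intro summable_comparison_test'[OF summable_add[OF assms(3) summable_powr]]) auto
  have "(\<lambda>N. (\<Sum>n<N. a n * z n) powr p) \<longlonglongrightarrow> (\<Sum>n. a n * z n) powr p"
    using assms by (intro tendsto_powr' summable_LIMSEQ[OF summable] tendsto_const)
      (auto intro!: always_eventually sum_nonneg)
  moreover have "(\<Sum>n<N. a n * z n) powr p \<le> (\<Sum>n. a n * z n powr p)" for N
  proof -
    have "sum a {..<N} \<le> 1"
      using sum_le_suminf[OF assms(3), of "{..<N}"] assms by auto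
    then have "(\<Sum>n<N. a n * z n) powr p \<le> (\<Sum>n<N. a n * z n powr p)"
      using assms by (intro powr_sum_le_sum_powr) auto
    also have "\<dots> \<le> (\<Sum>n. a n * z n powr p)"
      using assms by (intro sum_le_suminf summable_powr) auto
    finally show ?thesis .
  qed
  ultimately show "(\<Sum>n. a n * z n) powr p \<le> (\<Sum>n. a n * z n powr p)"
    by (intro LIMSEQ_le_const2) auto
qed

lemma cmod_diff_le_cmod_add_nonneg:
  fixes a b :: complex
  assumes "Im a = 0" "Im b = 0" "0 \<le> Re a" "0 \<le> Re b"
  shows "cmod (a - b) \<le> cmod (a + b)"
  using assms by (simp add: cmod_eq_Re)

lemma cmod_le_cmod_of_nonneg_diff:
  fixes a b :: complex
  assumes "Im a = 0" "0 \<le> Re a" "Im (b - a) = 0" "0 \<le> Re (b - a)"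
  shows "cmod a \<le> cmod b"
  using assms by (simp add: cmod_eq_Re)

definition abs_re_im :: "('a \<Rightarrow> complex) \<Rightarrow> 'a \<Rightarrow> complex" where
  "abs_re_im f x = complex_of_real (\<bar>Re (f x)\<bar> + \<bar>Im (f x)\<bar>)"

lemma cmod_abs_re_im_le: "cmod (abs_re_im f x) \<le> cmod (2 * f x)"
  unfolding abs_re_im_def norm_of_real using abs_Re_le_cmod[of "f x"] abs_Im_le_cmod[of "f x"]
  by (simp add: norm_mult)

section \<open>Weighted \<open>L\<^sup>p\<close> spaces\<close>

lemma AE_eq_of_nn_integral_eq:
  fixes f g :: "'a \<Rightarrow> ennreal"
  assumes [measurable]: "f \<in> borel_measurable M" "g \<in> borel_measurable M"
    and "AE x in M. f x \<le> g x"
    and "(\<integral>\<^sup>+x. f x \<partial>M) = (\<integral>\<^sup>+x. g x \<partial>M)"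
    and "(\<integral>\<^sup>+x. f x \<partial>M) \<noteq> \<infinity>"
  shows "AE x in M. f x = g x"
proof -
  have "AE x in M. g x \<le> f x"
  proof (rule ccontr)
    assume "\<not> (AE x in M. g x \<le> f x)"
    then have "(\<integral>\<^sup>+x. f x \<partial>M) < (\<integral>\<^sup>+x. g x \<partial>M)"
      using assms by (intro nn_integral_less) auto
    with assms(4) show False
      by simp
  qed
  with assms(3) show ?thesis
    by eventually_elim simp
qed

locale weighted_Lp =
  fixes M :: "'a measure" and w :: "'a \<Rightarrow> real" and p :: real
  assumes weight_pos: "\<And>x. 0 < w x"
    and weight_measurable[measurable]: "w \<in> borel_measurable M"
    and one_le_p: "1 \<le> p"
begin

lemma Lp_w_measurable: "f \<in> Lp_w M w p \<Longrightarrow> f \<in> borel_measurable M"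
  by (simp add: Lp_w_def)

lemma lp_integral_finite: "f \<in> Lp_w M w p \<Longrightarrow> lp_integral M w p f < \<infinity>"
  by (simp add: Lp_w_def)

lemma lp_integral_cong_AE: "AE x in M. f x = g x \<Longrightarrow> lp_integral M w p f = lp_integral M w p g"
  unfolding lp_integral_def by (rule nn_integral_cong_AE) auto

lemma lp_integral_mono_AE:
  assumes "AE x in M. cmod (f x) \<le> cmod (g x)"
  shows "lp_integral M w p f \<le> lp_integral M w p g"
  unfolding lp_integral_def
proof (rule nn_integral_mono_AE, use assms in \<open>rule eventually_mono\<close>)
  fix x assume "cmod (f x) \<le> cmod (g x)"
  then have "(cmod (f x) * w x) powr p \<le> (cmod (g x) * w x) powr p"
    using weight_pos[of x] one_le_p by (intro powr_mono2 mult_right_mono) auto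
  then show "ennreal ((cmod (f x) * w x) powr p) \<le> ennreal ((cmod (g x) * w x) powr p)"
    by (rule ennreal_leI)
qed

lemma lp_integral_cmult:
  assumes "f \<in> borel_measurable M"
  shows "lp_integral M w p (\<lambda>x. c * f x) = ennreal (cmod c powr p) * lp_integral M w p f"
  unfolding lp_integral_def using assms weight_pos
  by (subst nn_integral_cmult[symmetric])
    (auto intro!: nn_integral_cong simp: norm_mult powr_mult ennreal_mult' mult.assoc)

lemma lp_integral_add:
  assumes "f \<in> borel_measurable M" "g \<in> borel_measurable M"
  shows "lp_integral M w p f + lp_integral M w p g
    = (\<integral>\<^sup>+x. ennreal (w x powr p * (cmod (f x) powr p + cmod (g x) powr p)) \<partial>M)"
  unfolding lp_integral_def using assms weight_pos
  by (subst nn_integral_add[symmetric])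
    (auto intro!: nn_integral_cong simp: powr_mult distrib_left mult.commute simp flip: ennreal_plus)

lemma Lp_w_dominated:
  assumes "g \<in> borel_measurable M" "f \<in> Lp_w M w p" "AE x in M. cmod (g x) \<le> cmod (f x)"
  shows "g \<in> Lp_w M w p"
  using assms lp_integral_mono_AE[of g f] by (auto simp: Lp_w_def)

lemma Lp_w_zero: "(\<lambda>x. 0) \<in> Lp_w M w p"
  by (simp add: Lp_w_def lp_integral_def)

lemma Lp_w_lincomb:
  assumes f: "f \<in> Lp_w M w p" and g: "g \<in> Lp_w M w p"
  shows "(\<lambda>x. a * f x + b * g x) \<in> Lp_w M w p"
proof -
  have [measurable]: "f \<in> borel_measurable M" "g \<in> borel_measurable M"
    using f g by (auto simp: Lp_w_def)
  have "cmod (a * f x + b * g x)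
      \<le> cmod (2 * (if cmod (a * f x) \<le> cmod (b * g x) then b * g x else a * f x))" for x
    using norm_triangle_ineq[of "a * f x" "b * g x"] by auto
  then have "lp_integral M w p (\<lambda>x. a * f x + b * g x)
      \<le> lp_integral M w p (\<lambda>x. 2 * (if cmod (a * f x) \<le> cmod (b * g x) then b * g x else a * f x))"
    by (intro lp_integral_mono_AE AE_I2)
  also have "\<dots> \<le> ennreal (2 powr p) * (lp_integral M w p (\<lambda>x. a * f x) + lp_integral M w p (\<lambda>x. b * g x))"
  proof -
    have "lp_integral M w p (\<lambda>x. if cmod (a * f x) \<le> cmod (b * g x) then b * g x else a * f x)
        \<le> lp_integral M w p (\<lambda>x. a * f x) + lp_integral M w p (\<lambda>x. b * g x)"
      unfolding lp_integral_def
      by (subst nn_integral_add[symmetric]) (auto intro!: nn_integral_mono simp flip: ennreal_plus)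
    then show ?thesis
      by (subst lp_integral_cmult) (auto intro: mult_left_mono)
  qed
  also have "\<dots> < \<infinity>"
    using lp_integral_finite[OF f] lp_integral_finite[OF g]
    by (simp add: lp_integral_cmult ennreal_mult_less_top)
  finally show ?thesis
    by (simp add: Lp_w_def)
qed

lemma Lp_w_add: "f \<in> Lp_w M w p \<Longrightarrow> g \<in> Lp_w M w p \<Longrightarrow> (\<lambda>x. f x + g x) \<in> Lp_w M w p"
  using Lp_w_lincomb[of f g 1 1] by simp

lemma Lp_w_diff: "f \<in> Lp_w M w p \<Longrightarrow> g \<in> Lp_w M w p \<Longrightarrow> (\<lambda>x. f x - g x) \<in> Lp_w M w p"
  using Lp_w_lincomb[of f g 1 "-1"] by simp

lemma Lp_w_cmult: "f \<in> Lp_w M w p \<Longrightarrow> (\<lambda>x. c * f x) \<in> Lp_w M w p"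
  using Lp_w_lincomb[of f f c 0] by simp

lemma Lp_w_abs_re_im:
  assumes "f \<in> Lp_w M w p"
  shows "abs_re_im f \<in> Lp_w M w p"
proof -
  have [measurable]: "f \<in> borel_measurable M"
    using assms by (rule Lp_w_measurable)
  have "abs_re_im f \<in> borel_measurable M"
    unfolding abs_re_im_def by measurable
  then show ?thesis
    by (intro Lp_w_dominated[OF _ Lp_w_cmult[OF assms, of 2]] AE_I2 cmod_abs_re_im_le)
qed

lemma lp_norm_nonneg: "0 \<le> lp_norm M w p f"
  by (simp add: lp_norm_def)

lemma lp_integral_eq_lp_norm_powr:
  assumes "f \<in> Lp_w M w p"
  shows "lp_integral M w p f = ennreal (lp_norm M w p f powr p)"
proof -
  have "lp_norm M w p f powr p = enn2real (lp_integral M w p f)"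
    using one_le_p by (simp add: lp_norm_def powr_powr)
  then show ?thesis
    using lp_integral_finite[OF assms] by (simp add: less_top)
qed

lemma lp_norm_cong_AE: "AE x in M. f x = g x \<Longrightarrow> lp_norm M w p f = lp_norm M w p g"
  by (simp add: lp_norm_def lp_integral_cong_AE)

lemma lp_norm_mono_AE:
  assumes "g \<in> Lp_w M w p" "AE x in M. cmod (f x) \<le> cmod (g x)"
  shows "lp_norm M w p f \<le> lp_norm M w p g"
  unfolding lp_norm_def using assms one_le_p lp_integral_finite[OF assms(1)]
  by (intro powr_mono2 enn2real_mono lp_integral_mono_AE) (auto simp: less_top)

lemma lp_norm_cmult:
  assumes "f \<in> borel_measurable M"
  shows "lp_norm M w p (\<lambda>x. c * f x) = cmod c * lp_norm M w p f"
  using one_le_p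
  by (simp add: lp_norm_def lp_integral_cmult[OF assms] enn2real_mult powr_mult powr_powr)

lemma lp_norm_eq_0_imp_AE_zero:
  assumes "f \<in> Lp_w M w p" "lp_norm M w p f = 0"
  shows "AE x in M. f x = 0"
proof -
  have [measurable]: "f \<in> borel_measurable M"
    using assms(1) by (rule Lp_w_measurable)
  have "lp_integral M w p f = 0"
    using lp_integral_eq_lp_norm_powr[OF assms(1)] assms(2) by simp
  then have "AE x in M. ennreal ((cmod (f x) * w x) powr p) = 0"
    unfolding lp_integral_def by (subst (asm) nn_integral_0_iff_AE) auto
  then show ?thesis
    by (rule eventually_mono) (use weight_pos in \<open>auto simp: less_le\<close>)
qed

lemma lp_integral_parallelogram_iff_disjoint:
  assumes u: "u \<in> Lp_w M w p" and v: "v \<in> Lp_w M w p" and "p \<noteq> 2"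
  shows "lp_integral M w p (\<lambda>x. u x + v x) + lp_integral M w p (\<lambda>x. u x - v x)
      = 2 * lp_integral M w p u + 2 * lp_integral M w p v \<longleftrightarrow> disjoint_ae M u v"
proof -
  have u_meas[measurable]: "u \<in> borel_measurable M" and v_meas[measurable]: "v \<in> borel_measurable M"
    using u v by (auto intro: Lp_w_measurable)
  define F where "F x = ennreal (w x powr p * (cmod (u x + v x) powr p + cmod (u x - v x) powr p))" for x
  define G where "G x = ennreal (w x powr p * (2 * (cmod (u x) powr p + cmod (v x) powr p)))" for x
  have [measurable]: "F \<in> borel_measurable M" "G \<in> borel_measurable M"
    unfolding F_def G_def by measurable
  have int_F: "lp_integral M w p (\<lambda>x. u x + v x) + lp_integral M w p (\<lambda>x. u x - v x)
      = (\<integral>\<^sup>+x. F x \<partial>M)"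
    unfolding F_def by (rule lp_integral_add) measurable
  have "2 * lp_integral M w p u + 2 * lp_integral M w p v
      = 2 * (\<integral>\<^sup>+x. ennreal (w x powr p * (cmod (u x) powr p + cmod (v x) powr p)) \<partial>M)"
    by (simp only: lp_integral_add[OF u_meas v_meas] flip: distrib_left)
  also have "\<dots> = (\<integral>\<^sup>+x. G x \<partial>M)"
    unfolding G_def by (subst nn_integral_cmult[symmetric]) (auto intro!: nn_integral_cong simp: ennreal_mult algebra_simps)
  finally have int_G: "2 * lp_integral M w p u + 2 * lp_integral M w p v = (\<integral>\<^sup>+x. G x \<partial>M)" .
  have finite_G: "(\<integral>\<^sup>+x. G x \<partial>M) \<noteq> \<infinity>"
    using lp_integral_finite[OF u] lp_integral_finite[OF v] by (simp add: int_G[symmetric] ennreal_mult_eq_top_iff less_top)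
  have F_eq_G_iff: "F x = G x \<longleftrightarrow> u x * v x = 0" for x
  proof -
    have "F x = G x \<longleftrightarrow> cmod (u x + v x) powr p + cmod (u x - v x) powr p = 2 * (cmod (u x) powr p + cmod (v x) powr p)"
      using weight_pos[of x] by (simp add: F_def G_def)
    then show ?thesis
      using clarkson_eq_imp_mult_eq_0[of p "u x" "v x"] one_le_p \<open>p \<noteq> 2\<close> by auto
  qed
  have "(\<forall>x. G x \<le> F x) \<or> (\<forall>x. F x \<le> G x)"
  proof (cases "2 \<le> p")
    case True
    then show ?thesis
      using clarkson_ge[OF True] weight_pos by (auto simp: F_def G_def intro!: ennreal_leI mult_left_mono)
  next
    case False
    then show ?thesis
      using clarkson_le[of p] one_le_p weight_pos by (auto simp: F_def G_def intro!: ennreal_leI mult_left_mono)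
  qed
  then have "(\<integral>\<^sup>+x. F x \<partial>M) = (\<integral>\<^sup>+x. G x \<partial>M) \<longleftrightarrow> (AE x in M. F x = G x)"
    using finite_G AE_eq_of_nn_integral_eq[of F M G] AE_eq_of_nn_integral_eq[of G M F]
    by (auto intro: nn_integral_cong_AE elim: eventually_mono)
  then show ?thesis
    unfolding int_F int_G disjoint_ae_def F_eq_G_iff .
qed

lemma nn_integral_weighted_series_le:
  assumes "\<And>n. g n \<in> Lp_w M w p" "\<And>n. lp_norm M w p (g n) \<le> 1" "\<And>n. 0 \<le> a n" "summable a"
  shows "(\<integral>\<^sup>+y. (\<Sum>n. ennreal (a n * (cmod (g n y) * w y) powr p)) \<partial>M) \<le> ennreal (suminf a)"
proof -
  have [measurable]: "g n \<in> borel_measurable M" for n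
    using assms(1) by (rule Lp_w_measurable)
  have "(\<integral>\<^sup>+y. (\<Sum>n. ennreal (a n * (cmod (g n y) * w y) powr p)) \<partial>M)
      = (\<Sum>n. ennreal (a n) * lp_integral M w p (g n))"
    unfolding lp_integral_def using assms(3)
    by (subst nn_integral_suminf) (auto intro!: suminf_cong simp: ennreal_mult nn_integral_cmult)
  also have "\<dots> \<le> (\<Sum>n. ennreal (a n))"
  proof (intro suminf_le summableI)
    fix n
    have "lp_norm M w p (g n) powr p \<le> 1"
      using powr_mono2[of p "lp_norm M w p (g n)" 1] assms(2)[of n] lp_norm_nonneg one_le_p by simp
    then have "lp_integral M w p (g n) \<le> 1"
      using lp_integral_eq_lp_norm_powr[OF assms(1)] by simp
    then show "ennreal (a n) * lp_integral M w p (g n) \<le> ennreal (a n)"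
      using mult_left_mono[of _ 1 "ennreal (a n)"] by simp
  qed
  also have "\<dots> = ennreal (suminf a)"
    using assms(3,4) by (simp add: suminf_ennreal2)
  finally show ?thesis .
qed

lemma weighted_series_in_Lp_w:
  assumes g: "\<And>n. g n \<in> Lp_w M w p" "\<And>n. lp_norm M w p (g n) \<le> 1"
    and a: "\<And>n. 0 \<le> a n" "summable a" "suminf a \<le> 1"
  defines "G \<equiv> \<lambda>y. complex_of_real (enn2real (\<Sum>n. ennreal (a n * cmod (g n y))))"
  shows "G \<in> Lp_w M w p" and "AE y in M. a n * cmod (g n y) \<le> Re (G y)"
proof -
  have [measurable]: "g n \<in> borel_measurable M" for n
    using g(1) by (rule Lp_w_measurable)
  define R where "R y = (\<Sum>n. ennreal (a n * (cmod (g n y) * w y) powr p))" for y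
  have int_R: "(\<integral>\<^sup>+y. R y \<partial>M) \<le> 1"
    using nn_integral_weighted_series_le[OF g a(1,2)] a(3) unfolding R_def
    by (meson order_trans ennreal_le_1)
  then have AE_R: "AE y in M. R y \<noteq> \<infinity>"
    unfolding R_def by (intro nn_integral_PInf_AE) (auto simp: top_unique)
  have pointwise: "a n * cmod (g n y) \<le> Re (G y) \<and> ennreal ((cmod (G y) * w y) powr p) \<le> R y"
    if "R y \<noteq> \<infinity>" for n y
  proof -
    have wy: "0 < w y"
      by (rule weight_pos)
    have summable_R: "summable (\<lambda>n. a n * (cmod (g n y) * w y) powr p)"
      using that a(1) unfolding R_def by (intro summable_suminf_not_top) auto
    have "0 \<le> cmod (g n y) * w y" for n
      using wy by simp
    note jensen = powr_suminf_le_suminf_powr[OF one_le_p a this summable_R]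
    have summable_g: "summable (\<lambda>n. a n * cmod (g n y))"
      using summable_divide[OF jensen(1), of "w y"] wy by simp
    have G_eq: "G y = complex_of_real (\<Sum>n. a n * cmod (g n y))"
      unfolding G_def using summable_g a(1) by (simp add: suminf_ennreal2 suminf_nonneg)
    have "a n * cmod (g n y) \<le> (\<Sum>n. a n * cmod (g n y))"
      using sum_le_suminf[OF summable_g, of "{n}"] a(1) by simp
    moreover have "((\<Sum>n. a n * cmod (g n y)) * w y) powr p \<le> (\<Sum>n. a n * (cmod (g n y) * w y) powr p)"
      using jensen(2) by (simp add: suminf_mult2[OF summable_g] mult.assoc)
    ultimately show ?thesis
      using summable_R a(1) summable_g
      by (auto simp: G_eq R_def suminf_ennreal2 suminf_nonneg intro!: ennreal_leI)
  qed
  have "lp_integral M w p G \<le> (\<integral>\<^sup>+y. R y \<partial>M)"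
    unfolding lp_integral_def using AE_R pointwise by (auto intro!: nn_integral_mono_AE elim: eventually_mono)
  also have "\<dots> < \<infinity>"
    using int_R by (simp add: le_less_trans)
  finally show "G \<in> Lp_w M w p"
    unfolding Lp_w_def G_def by simp
  show "AE y in M. a n * cmod (g n y) \<le> Re (G y)"
    using AE_R pointwise by (auto elim: eventually_mono)
qed

end

section \<open>Linear maps and Lamperti's theorem\<close>

locale Lp_map = src: weighted_Lp M w p + tgt: weighted_Lp N v p
  for M :: "'a measure" and w and N :: "'b measure" and v and p +
  fixes S :: "('a \<Rightarrow> complex) \<Rightarrow> 'b \<Rightarrow> complex"
  assumes maps_into: "\<And>f. f \<in> Lp_w M w p \<Longrightarrow> S f \<in> Lp_w N v p"
    and respects_ae_eq: "\<And>f g. f \<in> Lp_w M w p \<Longrightarrow> g \<in> Lp_w M w p \<Longrightarrow>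
      ae_eq M f g \<Longrightarrow> ae_eq N (S f) (S g)"
    and linear_ae: "\<And>f g a b. f \<in> Lp_w M w p \<Longrightarrow> g \<in> Lp_w M w p \<Longrightarrow>
      ae_eq N (S (\<lambda>x. a * f x + b * g x)) (\<lambda>y. a * S f y + b * S g y)"
begin

lemma S_lincomb:
  "f \<in> Lp_w M w p \<Longrightarrow> g \<in> Lp_w M w p \<Longrightarrow>
    AE y in N. S (\<lambda>x. a * f x + b * g x) y = a * S f y + b * S g y"
  using linear_ae by (simp add: ae_eq_def)

lemma S_add:
  "f \<in> Lp_w M w p \<Longrightarrow> g \<in> Lp_w M w p \<Longrightarrow> AE y in N. S (\<lambda>x. f x + g x) y = S f y + S g y"
  using S_lincomb[of f g 1 1] by simp

lemma S_diff:
  "f \<in> Lp_w M w p \<Longrightarrow> g \<in> Lp_w M w p \<Longrightarrow> AE y in N. S (\<lambda>x. f x - g x) y = S f y - S g y"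
  using S_lincomb[of f g 1 "-1"] by simp

lemma S_cmult: "f \<in> Lp_w M w p \<Longrightarrow> AE y in N. S (\<lambda>x. c * f x) y = c * S f y"
  using S_lincomb[of f f c 0] by simp

lemma S_AE_zero:
  assumes "f \<in> Lp_w M w p" "AE x in M. f x = 0"
  shows "AE y in N. S f y = 0"
proof -
  have "AE y in N. S f y = S (\<lambda>x. 0) y"
    using respects_ae_eq[OF assms(1) src.Lp_w_zero] assms(2) by (simp add: ae_eq_def)
  with S_cmult[OF src.Lp_w_zero, of 0] show ?thesis
    by eventually_elim simp
qed

lemma lp_norm_S_cmult:
  "f \<in> Lp_w M w p \<Longrightarrow> lp_norm N v p (S (\<lambda>x. c * f x)) = cmod c * lp_norm N v p (S f)"
  using S_cmult[of f c] maps_into[of f]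
  by (simp add: tgt.lp_norm_cong_AE tgt.lp_norm_cmult tgt.Lp_w_measurable)

lemma isometry_lp_integral_eq:
  assumes "isometry_lp M w N v p S" "f \<in> Lp_w M w p"
  shows "lp_integral N v p (S f) = lp_integral M w p f"
  using assms
  by (simp add: isometry_lp_def src.lp_integral_eq_lp_norm_powr tgt.lp_integral_eq_lp_norm_powr maps_into)

text \<open>Lamperti's argument: an isometry preserves both sides of Clarkson's inequality, whose
  equality case characterises disjointness when \<open>p \<noteq> 2\<close>.\<close>

lemma isometry_disjoint_iff:
  assumes "isometry_lp M w N v p S" "p \<noteq> 2" and f: "f \<in> Lp_w M w p" and g: "g \<in> Lp_w M w p"
  shows "disjoint_ae N (S f) (S g) \<longleftrightarrow> disjoint_ae M f g"
proof -
  have "lp_integral N v p (\<lambda>y. S f y + S g y) = lp_integral N v p (S (\<lambda>x. f x + g x))"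
    using S_add[OF f g] by (intro tgt.lp_integral_cong_AE) (auto elim: eventually_mono)
  also have "\<dots> = lp_integral M w p (\<lambda>x. f x + g x)"
    using assms(1) f g by (intro isometry_lp_integral_eq src.Lp_w_add)
  finally have add: "lp_integral N v p (\<lambda>y. S f y + S g y) = lp_integral M w p (\<lambda>x. f x + g x)" .
  have "lp_integral N v p (\<lambda>y. S f y - S g y) = lp_integral N v p (S (\<lambda>x. f x - g x))"
    using S_diff[OF f g] by (intro tgt.lp_integral_cong_AE) (auto elim: eventually_mono)
  also have "\<dots> = lp_integral M w p (\<lambda>x. f x - g x)"
    using assms(1) f g by (intro isometry_lp_integral_eq src.Lp_w_diff)
  finally have diff: "lp_integral N v p (\<lambda>y. S f y - S g y) = lp_integral M w p (\<lambda>x. f x - g x)" .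
  show ?thesis
    using tgt.lp_integral_parallelogram_iff_disjoint[OF maps_into[OF f] maps_into[OF g] \<open>p \<noteq> 2\<close>]
      src.lp_integral_parallelogram_iff_disjoint[OF f g \<open>p \<noteq> 2\<close>]
    by (simp add: add diff isometry_lp_integral_eq[OF assms(1) f] isometry_lp_integral_eq[OF assms(1) g])
qed

lemma isometry_bicontinuous: "isometry_lp M w N v p S \<Longrightarrow> bicontinuous M w N v p S"
  unfolding isometry_lp_def bicontinuous_def by (metis order_refl mult_1)

lemma isometry_biseparating: "isometry_lp M w N v p S \<Longrightarrow> p \<noteq> 2 \<Longrightarrow> biseparating M w N v p S"
  unfolding biseparating_def using isometry_disjoint_iff by blast

end

section \<open>Positive maps are bounded\<close>

locale positive_Lp_map = Lp_map +
  assumes positive: "\<And>f. f \<in> Lp_w M w p \<Longrightarrow> nonneg_ae M f \<Longrightarrow> nonneg_ae N (S f)"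
begin

lemma cmod_S_mono:
  assumes "f \<in> Lp_w M w p" "g \<in> Lp_w M w p" "nonneg_ae M f" "nonneg_ae M (\<lambda>x. g x - f x)"
  shows "AE y in N. cmod (S f y) \<le> cmod (S g y)"
proof -
  have "nonneg_ae N (S (\<lambda>x. g x - f x))"
    using assms by (intro positive src.Lp_w_diff)
  moreover have "nonneg_ae N (S f)"
    using assms by (intro positive)
  ultimately show ?thesis
    using S_diff[OF assms(2,1)] unfolding nonneg_ae_def
  proof eventually_elim
    case (elim y)
    then show ?case
      using cmod_le_cmod_of_nonneg_diff[of "S f y" "S g y"] by simp
  qed
qed

lemma cmod_S_le_S_abs_real:
  assumes f: "f \<in> Lp_w M w p" and real: "\<And>x. Im (f x) = 0"
  shows "AE y in N. cmod (S f y) \<le> cmod (S (\<lambda>x. complex_of_real \<bar>Re (f x)\<bar>) y)"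
proof -
  have [measurable]: "f \<in> borel_measurable M"
    using f by (rule src.Lp_w_measurable)
  define f_pos where "f_pos x = complex_of_real (max (Re (f x)) 0)" for x
  define f_neg where "f_neg x = complex_of_real (max (- Re (f x)) 0)" for x
  have [measurable]: "f_pos \<in> borel_measurable M" "f_neg \<in> borel_measurable M"
    unfolding f_pos_def f_neg_def by measurable
  have "cmod (f_pos x) \<le> cmod (f x)" "cmod (f_neg x) \<le> cmod (f x)" for x
    using abs_Re_le_cmod[of "f x"] by (auto simp: f_pos_def f_neg_def)
  then have Lp: "f_pos \<in> Lp_w M w p" "f_neg \<in> Lp_w M w p"
    by (auto intro!: src.Lp_w_dominated[OF _ f])
  have "f = (\<lambda>x. f_pos x - f_neg x)"
    using real by (auto simp: f_pos_def f_neg_def complex_eq_iff)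
  then have S_f: "AE y in N. S f y = S f_pos y - S f_neg y"
    using S_diff[OF Lp] by simp
  have "(\<lambda>x. complex_of_real \<bar>Re (f x)\<bar>) = (\<lambda>x. f_pos x + f_neg x)"
    by (auto simp: f_pos_def f_neg_def max_def simp flip: of_real_add)
  then have S_abs: "AE y in N. S (\<lambda>x. complex_of_real \<bar>Re (f x)\<bar>) y = S f_pos y + S f_neg y"
    using S_add[OF Lp] by simp
  have "nonneg_ae N (S f_pos)" "nonneg_ae N (S f_neg)"
    using Lp by (auto intro!: positive simp: f_pos_def f_neg_def nonneg_ae_def[of M])
  then show ?thesis
    using S_f S_abs unfolding nonneg_ae_def
    by eventually_elim (simp add: cmod_diff_le_cmod_add_nonneg)
qed

lemma cmod_S_le_S_abs_re_im:
  assumes f: "f \<in> Lp_w M w p"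
  shows "AE y in N. cmod (S f y) \<le> cmod (S (abs_re_im f) y)"
proof -
  have [measurable]: "f \<in> borel_measurable M"
    using f by (rule src.Lp_w_measurable)
  define r where "r x = complex_of_real (Re (f x))" for x
  define i where "i x = complex_of_real (Im (f x))" for x
  define r_abs where "r_abs x = complex_of_real \<bar>Re (r x)\<bar>" for x
  define i_abs where "i_abs x = complex_of_real \<bar>Re (i x)\<bar>" for x
  have [measurable]: "r \<in> borel_measurable M" "i \<in> borel_measurable M"
    "r_abs \<in> borel_measurable M" "i_abs \<in> borel_measurable M"
    unfolding r_def i_def r_abs_def i_abs_def by measurable
  have "cmod (r x) \<le> cmod (f x)" "cmod (i x) \<le> cmod (f x)"
    "cmod (r_abs x) \<le> cmod (f x)" "cmod (i_abs x) \<le> cmod (f x)" for x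
    using abs_Re_le_cmod[of "f x"] abs_Im_le_cmod[of "f x"] by (auto simp: r_def i_def r_abs_def i_abs_def)
  then have Lp: "r \<in> Lp_w M w p" "i \<in> Lp_w M w p" and Lp_abs: "r_abs \<in> Lp_w M w p" "i_abs \<in> Lp_w M w p"
    by (auto intro!: src.Lp_w_dominated[OF _ f])
  have real: "\<And>x. Im (r x) = 0" "\<And>x. Im (i x) = 0"
    by (simp_all add: r_def i_def)
  have f_eq: "(\<lambda>x. 1 * r x + \<i> * i x) = f"
    by (auto simp: r_def i_def complex_eq_iff)
  have abs_eq: "(\<lambda>x. r_abs x + i_abs x) = abs_re_im f"
    by (auto simp: abs_re_im_def r_abs_def i_abs_def r_def i_def)
  have "nonneg_ae N (S r_abs)" "nonneg_ae N (S i_abs)"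
    using Lp_abs by (auto intro!: positive simp: nonneg_ae_def[of M] r_abs_def i_abs_def)
  then show ?thesis
    using S_lincomb[OF Lp, of 1 \<i>] S_add[OF Lp_abs]
      cmod_S_le_S_abs_real[OF Lp(1) real(1)] cmod_S_le_S_abs_real[OF Lp(2) real(2)]
    unfolding nonneg_ae_def f_eq abs_eq r_abs_def[symmetric] i_abs_def[symmetric]
  proof eventually_elim
    case (elim y)
    have "cmod (S f y) \<le> cmod (S r y) + cmod (S i y)"
      using elim(3) norm_triangle_ineq[of "S r y" "\<i> * S i y"] by (simp add: norm_mult)
    also have "\<dots> \<le> cmod (S r_abs y) + cmod (S i_abs y)"
      using elim(5,6) by (rule add_mono)
    also have "\<dots> = cmod (S (abs_re_im f) y)"
      using elim(1,2,4) by (simp add: cmod_eq_Re)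
    finally show ?case .
  qed
qed

text \<open>If \<open>S\<close> were unbounded on the positive part of the unit ball, pick \<open>g\<^sub>n\<close> there with
  \<open>\<parallel>S g\<^sub>n\<parallel> > n / a\<^sub>n\<close> for \<open>a\<^sub>n = 2 powr -(n+1)\<close>; the series \<open>G = \<Sum>a\<^sub>n g\<^sub>n\<close> lies in \<open>L\<^sup>p\<close> and
  dominates every term, so positivity gives \<open>\<parallel>S G\<parallel> > n\<close> for all \<open>n\<close>.\<close>

lemma bounded_on_nonneg_unit_ball:
  "\<exists>C. \<forall>g\<in>Lp_w M w p. nonneg_ae M g \<longrightarrow> lp_norm M w p g \<le> 1 \<longrightarrow> lp_norm N v p (S g) \<le> C"
proof (rule ccontr)
  define a :: "nat \<Rightarrow> real" where "a n = (1/2) ^ Suc n" for n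
  have "a sums 1"
    unfolding a_def[abs_def] by (rule power_half_series)
  then have a: "\<And>n. 0 \<le> a n" "summable a" "suminf a \<le> 1"
    by (auto simp: a_def sums_iff)
  assume "\<not> ?thesis"
  then have "\<forall>n. \<exists>g. g \<in> Lp_w M w p \<and> nonneg_ae M g \<and> lp_norm M w p g \<le> 1
      \<and> real n / a n < lp_norm N v p (S g)"
    by (auto simp: not_le)
  then obtain g where g: "\<And>n. g n \<in> Lp_w M w p" "\<And>n. nonneg_ae M (g n)"
    "\<And>n. lp_norm M w p (g n) \<le> 1" "\<And>n. real n / a n < lp_norm N v p (S (g n))"
    by metis
  define G where "G y = complex_of_real (enn2real (\<Sum>n. ennreal (a n * cmod (g n y))))" for y
  have G: "G \<in> Lp_w M w p" and G_ge: "\<And>n. AE y in M. a n * cmod (g n y) \<le> Re (G y)"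
    using src.weighted_series_in_Lp_w[OF g(1,3) a] by (simp_all add: G_def[abs_def])
  have "real n < lp_norm N v p (S G)" for n
  proof -
    have ag: "(\<lambda>x. of_real (a n) * g n x) \<in> Lp_w M w p"
      using g(1) by (rule src.Lp_w_cmult)
    have "nonneg_ae M (\<lambda>x. of_real (a n) * g n x)"
      using g(2)[of n] a(1)[of n] unfolding nonneg_ae_def by (auto elim: eventually_mono)
    moreover have "nonneg_ae M (\<lambda>x. G x - of_real (a n) * g n x)"
      using g(2)[of n] G_ge[of n] unfolding nonneg_ae_def
      by eventually_elim (simp add: G_def cmod_eq_Re)
    ultimately have "AE y in N. cmod (S (\<lambda>x. of_real (a n) * g n x) y) \<le> cmod (S G y)"
      by (rule cmod_S_mono[OF ag G])
    then have "lp_norm N v p (S (\<lambda>x. of_real (a n) * g n x)) \<le> lp_norm N v p (S G)"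
      using G by (intro tgt.lp_norm_mono_AE maps_into)
    moreover have "real n < a n * lp_norm N v p (S (g n))"
      using g(4)[of n] by (simp add: a_def field_simps)
    ultimately show ?thesis
      using a(1)[of n] by (simp add: lp_norm_S_cmult[OF g(1)])
  qed
  moreover obtain m :: nat where "lp_norm N v p (S G) < real m"
    using reals_Archimedean2 by blast
  ultimately show False
    by (metis less_asym)
qed

lemma bounded_on_nonneg:
  "\<exists>C\<ge>0. \<forall>g\<in>Lp_w M w p. nonneg_ae M g \<longrightarrow> lp_norm N v p (S g) \<le> C * lp_norm M w p g"
proof -
  obtain C where C: "\<And>g. g \<in> Lp_w M w p \<Longrightarrow> nonneg_ae M g \<Longrightarrow> lp_norm M w p g \<le> 1 \<Longrightarrow>
      lp_norm N v p (S g) \<le> C"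
    using bounded_on_nonneg_unit_ball by blast
  have "lp_norm N v p (S g) \<le> max C 0 * lp_norm M w p g" if g: "g \<in> Lp_w M w p" "nonneg_ae M g" for g
  proof (cases "lp_norm M w p g = 0")
    case True
    then have "AE y in N. S g y = 0"
      using g by (intro S_AE_zero src.lp_norm_eq_0_imp_AE_zero)
    then have "lp_norm N v p (S g) = lp_norm N v p (\<lambda>y. 0)"
      by (rule tgt.lp_norm_cong_AE)
    then show ?thesis
      using True by (simp add: lp_norm_def lp_integral_def)
  next
    case False
    define c where "c = 1 / lp_norm M w p g"
    have c: "0 < c"
      using False src.lp_norm_nonneg[of g] by (simp add: c_def)
    have "lp_norm N v p (S (\<lambda>x. of_real c * g x)) \<le> C"
    proof (rule C)
      show "(\<lambda>x. of_real c * g x) \<in> Lp_w M w p"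
        using g(1) by (rule src.Lp_w_cmult)
      show "nonneg_ae M (\<lambda>x. of_real c * g x)"
        using g(2) c unfolding nonneg_ae_def by (auto elim: eventually_mono)
      show "lp_norm M w p (\<lambda>x. of_real c * g x) \<le> 1"
        unfolding src.lp_norm_cmult[OF src.Lp_w_measurable[OF g(1)]] norm_of_real
        using c False by (simp add: c_def)
    qed
    then have "c * lp_norm N v p (S g) \<le> C"
      unfolding lp_norm_S_cmult[OF g(1)] norm_of_real using c by simp
    then have "lp_norm N v p (S g) \<le> C * lp_norm M w p g"
      using False src.lp_norm_nonneg[of g] by (simp add: c_def field_simps)
    then show ?thesis
      using mult_right_mono[OF max.cobounded1[of C 0] src.lp_norm_nonneg[of g]] by linarith
  qed
  then show ?thesis
    by (intro exI[of _ "max C 0"]) auto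
qed

lemma bounded: "\<exists>C. \<forall>f\<in>Lp_w M w p. lp_norm N v p (S f) \<le> C * lp_norm M w p f"
proof -
  obtain C where "C \<ge> 0" and C: "\<And>g. g \<in> Lp_w M w p \<Longrightarrow> nonneg_ae M g \<Longrightarrow>
      lp_norm N v p (S g) \<le> C * lp_norm M w p g"
    using bounded_on_nonneg by blast
  have "lp_norm N v p (S f) \<le> 2 * C * lp_norm M w p f" if f: "f \<in> Lp_w M w p" for f
  proof -
    have V: "abs_re_im f \<in> Lp_w M w p"
      using f by (rule src.Lp_w_abs_re_im)
    have "lp_norm N v p (S f) \<le> lp_norm N v p (S (abs_re_im f))"
      using V cmod_S_le_S_abs_re_im[OF f] by (intro tgt.lp_norm_mono_AE maps_into)
    also have "\<dots> \<le> C * lp_norm M w p (abs_re_im f)"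
      using V by (rule C) (simp add: nonneg_ae_def abs_re_im_def)
    also have "\<dots> \<le> C * lp_norm M w p (\<lambda>x. 2 * f x)"
      using \<open>C \<ge> 0\<close> cmod_abs_re_im_le[of f] src.Lp_w_cmult[OF f]
      by (intro mult_left_mono src.lp_norm_mono_AE) auto
    also have "\<dots> = 2 * C * lp_norm M w p f"
      by (simp add: src.lp_norm_cmult src.Lp_w_measurable[OF f])
    finally show ?thesis .
  qed
  then show ?thesis
    by blast
qed

end

section \<open>Bipositive isomorphisms\<close>

locale Lp_iso = Lp_map +
  assumes reflects_ae_eq: "\<And>f g. f \<in> Lp_w M w p \<Longrightarrow> g \<in> Lp_w M w p \<Longrightarrow>
      ae_eq N (S f) (S g) \<Longrightarrow> ae_eq M f g"
    and onto: "\<And>h. h \<in> Lp_w N v p \<Longrightarrow> \<exists>f\<in>Lp_w M w p. ae_eq N (S f) h"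
begin

definition inv_map :: "('b \<Rightarrow> complex) \<Rightarrow> 'a \<Rightarrow> complex" where
  "inv_map h = (SOME f. f \<in> Lp_w M w p \<and> ae_eq N (S f) h)"

lemma inv_map:
  assumes "h \<in> Lp_w N v p"
  shows "inv_map h \<in> Lp_w M w p" and "ae_eq N (S (inv_map h)) h"
  using someI_ex[OF onto[OF assms, unfolded Bex_def]] by (simp_all add: inv_map_def)

lemma inv_map_S: "f \<in> Lp_w M w p \<Longrightarrow> ae_eq M (inv_map (S f)) f"
  using inv_map[OF maps_into] by (intro reflects_ae_eq) auto

lemma Lp_iso_inv_map: "Lp_iso N v M w p inv_map"
proof unfold_locales
  fix h h' assume h: "h \<in> Lp_w N v p" "h' \<in> Lp_w N v p"
  show "ae_eq M (inv_map h) (inv_map h')" if "ae_eq N h h'"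
    using inv_map[OF h(1)] inv_map[OF h(2)] that
    by (intro reflects_ae_eq) (auto simp: ae_eq_def elim!: eventually_rev_mp)
  fix a b
  have comb: "(\<lambda>x. a * h x + b * h' x) \<in> Lp_w N v p"
    using h by (rule tgt.Lp_w_lincomb)
  show "ae_eq M (inv_map (\<lambda>x. a * h x + b * h' x)) (\<lambda>y. a * inv_map h y + b * inv_map h' y)"
  proof (rule reflects_ae_eq)
    show "ae_eq N (S (inv_map (\<lambda>x. a * h x + b * h' x))) (S (\<lambda>y. a * inv_map h y + b * inv_map h' y))"
      using inv_map(2)[OF comb] inv_map(2)[OF h(1)] inv_map(2)[OF h(2)]
        S_lincomb[OF inv_map(1)[OF h(1)] inv_map(1)[OF h(2)], of a b]
      unfolding ae_eq_def by eventually_elim simp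
  qed (use inv_map h comb in \<open>auto intro: src.Lp_w_lincomb\<close>)
next
  show "\<And>h. h \<in> Lp_w N v p \<Longrightarrow> inv_map h \<in> Lp_w M w p"
    by (rule inv_map(1))
  show "ae_eq N h h'" if "h \<in> Lp_w N v p" "h' \<in> Lp_w N v p" "ae_eq M (inv_map h) (inv_map h')" for h h'
    using inv_map(2)[OF that(1)] inv_map(2)[OF that(2)] respects_ae_eq[OF inv_map(1)[OF that(1)] inv_map(1)[OF that(2)] that(3)]
    unfolding ae_eq_def by eventually_elim simp
  show "\<exists>h\<in>Lp_w N v p. ae_eq M (inv_map h) f" if "f \<in> Lp_w M w p" for f
    using inv_map_S[OF that] maps_into[OF that] by blast
qed

end

locale bipositive_Lp_iso = Lp_iso + positive_Lp_map +
  assumes reflects_positive: "\<And>f. f \<in> Lp_w M w p \<Longrightarrow> nonneg_ae N (S f) \<Longrightarrow> nonneg_ae M f"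
begin

lemma bipositive_Lp_iso_inv_map: "bipositive_Lp_iso N v M w p inv_map"
proof -
  interpret inv: Lp_iso N v M w p inv_map
    by (rule Lp_iso_inv_map)
  show ?thesis
  proof unfold_locales
    fix h assume h: "h \<in> Lp_w N v p"
    show "nonneg_ae M (inv_map h)" if "nonneg_ae N h"
      using inv_map[OF h] that
      by (intro reflects_positive) (auto simp: ae_eq_def nonneg_ae_def elim: eventually_rev_mp)
    show "nonneg_ae N h" if "nonneg_ae M (inv_map h)"
      using positive[OF inv_map(1)[OF h] that] inv_map(2)[OF h]
      unfolding ae_eq_def nonneg_ae_def by eventually_elim simp
  qed
qed

lemma nonneg_ae_diff_if_S_le:
  assumes z: "z \<in> Lp_w M w p" and V: "V \<in> Lp_w M w p"
    and "nonneg_ae N (S z)" "nonneg_ae N (S V)" "AE y in N. cmod (S z y) \<le> cmod (S V y)"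
  shows "nonneg_ae M (\<lambda>x. V x - z x)"
proof (rule reflects_positive)
  show "(\<lambda>x. V x - z x) \<in> Lp_w M w p"
    using V z by (rule src.Lp_w_diff)
  show "nonneg_ae N (S (\<lambda>x. V x - z x))"
    using assms(3-5) S_diff[OF V z] unfolding nonneg_ae_def
    by eventually_elim (simp add: cmod_eq_Re)
qed

text \<open>Lattice argument: the preimage \<open>z\<close> of \<open>min |S V\<^sub>f| |S V\<^sub>g|\<close> lies between \<open>0\<close> and both
  majorants \<open>V\<^sub>f\<close>, \<open>V\<^sub>g\<close> of \<open>|f|\<close>, \<open>|g|\<close>, which have disjoint supports; so \<open>z = 0\<close>.\<close>

lemma disjoint_preserving:
  assumes f: "f \<in> Lp_w M w p" and g: "g \<in> Lp_w M w p" and "disjoint_ae M f g"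
  shows "disjoint_ae N (S f) (S g)"
proof -
  define Vf Vg where "Vf = abs_re_im f" and "Vg = abs_re_im g"
  have V: "Vf \<in> Lp_w M w p" "Vg \<in> Lp_w M w p"
    unfolding Vf_def Vg_def using f g by (auto intro: src.Lp_w_abs_re_im)
  have SV_nonneg: "nonneg_ae N (S Vf)" "nonneg_ae N (S Vg)"
    using V by (auto intro!: positive simp: Vf_def Vg_def abs_re_im_def nonneg_ae_def[of M])
  have [measurable]: "S Vf \<in> borel_measurable N" "S Vg \<in> borel_measurable N"
    using V by (auto intro: tgt.Lp_w_measurable maps_into)
  define u where "u y = complex_of_real (min (cmod (S Vf y)) (cmod (S Vg y)))" for y
  have "u \<in> borel_measurable N"
    unfolding u_def by measurable
  then have "u \<in> Lp_w N v p"
    by (rule tgt.Lp_w_dominated[OF _ maps_into[OF V(1)]]) (auto simp: u_def)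
  then obtain z where z: "z \<in> Lp_w M w p" and Sz: "AE y in N. S z y = u y"
    using onto by (auto simp: ae_eq_def)
  have Sz_nonneg: "nonneg_ae N (S z)"
    using Sz unfolding nonneg_ae_def by (auto simp: u_def elim: eventually_mono)
  then have z_nonneg: "nonneg_ae M z"
    by (rule reflects_positive[OF z])
  have "AE y in N. cmod (S z y) \<le> cmod (S Vf y)" "AE y in N. cmod (S z y) \<le> cmod (S Vg y)"
    using Sz by (auto simp: u_def elim: eventually_mono)
  then have "nonneg_ae M (\<lambda>x. Vf x - z x)" "nonneg_ae M (\<lambda>x. Vg x - z x)"
    using Sz_nonneg SV_nonneg by (auto intro: nonneg_ae_diff_if_S_le z V)
  then have "AE x in M. z x = 0"
    using z_nonneg \<open>disjoint_ae M f g\<close> unfolding nonneg_ae_def disjoint_ae_def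
  proof eventually_elim
    case (elim x)
    then have "Vf x = 0 \<or> Vg x = 0"
      by (auto simp: Vf_def Vg_def abs_re_im_def)
    then show ?case
      using elim by (auto simp: complex_eq_iff)
  qed
  then have "AE y in N. S z y = 0"
    by (rule S_AE_zero[OF z])
  with Sz have "AE y in N. u y = 0"
    by eventually_elim simp
  then show ?thesis
    using cmod_S_le_S_abs_re_im[OF f] cmod_S_le_S_abs_re_im[OF g] unfolding disjoint_ae_def
    by eventually_elim (auto simp: u_def Vf_def Vg_def min_def split: if_splits)
qed

lemma bicontinuous_map: "bicontinuous M w N v p S"
proof -
  interpret inv: bipositive_Lp_iso N v M w p inv_map
    by (rule bipositive_Lp_iso_inv_map)
  obtain C where C: "\<And>h. h \<in> Lp_w N v p \<Longrightarrow> lp_norm M w p (inv_map h) \<le> C * lp_norm N v p h"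
    using inv.bounded by blast
  have "lp_norm M w p f \<le> C * lp_norm N v p (S f)" if "f \<in> Lp_w M w p" for f
    using C[OF maps_into[OF that]] inv_map_S[OF that] src.lp_norm_cong_AE[of "inv_map (S f)" f]
    by (simp add: ae_eq_def)
  then show ?thesis
    using bounded unfolding bicontinuous_def by blast
qed

lemma biseparating_map: "biseparating M w N v p S"
proof -
  interpret inv: bipositive_Lp_iso N v M w p inv_map
    by (rule bipositive_Lp_iso_inv_map)
  have "disjoint_ae M f g" if "f \<in> Lp_w M w p" "g \<in> Lp_w M w p" "disjoint_ae N (S f) (S g)" for f g
    using inv.disjoint_preserving[OF maps_into[OF that(1)] maps_into[OF that(2)] that(3)]
      inv_map_S[OF that(1)] inv_map_S[OF that(2)]
    unfolding disjoint_ae_def ae_eq_def by eventually_elim simp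
  then show ?thesis
    using disjoint_preserving unfolding biseparating_def by blast
qed

end

lemma weighted_Lp_if_weighted_lc_group:
  assumes "weighted_lc_group gm e gi mu w" "1 \<le> p"
  shows "weighted_Lp mu w p"
proof
  have "sets mu = sets borel" and weight: "weight gm e w"
    using assms(1) by (auto simp: weighted_lc_group_def lc_group_def)
  moreover have "w \<in> borel_measurable borel"
    using weight by (intro borel_measurable_continuous_onI) (simp add: weight_def)
  ultimately show "w \<in> borel_measurable mu"
    by (simp cong: measurable_cong_sets)
  show "\<And>x. 0 < w x"
    using weight by (simp add: weight_def)
qed (rule assms(2))

lemma Lp_iso_if_algebra_iso:
  assumes "weighted_lc_group multG eG invG muG w1" "weighted_lc_group multH eH invH muH w2" "1 \<le> p"
    and "algebra_iso multG invG muG w1 multH invH muH w2 p T"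
  shows "Lp_iso muG w1 muH w2 p T"
proof -
  interpret src: weighted_Lp muG w1 p
    using assms(1,3) by (rule weighted_Lp_if_weighted_lc_group)
  interpret tgt: weighted_Lp muH w2 p
    using assms(2,3) by (rule weighted_Lp_if_weighted_lc_group)
  show ?thesis
    using assms(4) by unfold_locales (auto simp: algebra_iso_def)
qed

theorem proposition2p6:
  fixes multG :: "'g::t2_space \<Rightarrow> 'g \<Rightarrow> 'g" and eG :: 'g and invG :: "'g \<Rightarrow> 'g"
    and muG :: "'g measure" and w1 :: "'g \<Rightarrow> real"
    and multH :: "'h::t2_space \<Rightarrow> 'h \<Rightarrow> 'h" and eH :: 'h and invH :: "'h \<Rightarrow> 'h"
    and muH :: "'h measure" and w2 :: "'h \<Rightarrow> real"
    and p :: real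
    and T :: "('g \<Rightarrow> complex) \<Rightarrow> ('h \<Rightarrow> complex)"
  assumes "weighted_lc_group multG eG invG muG w1"
    and "weighted_lc_group multH eH invH muH w2"
    and "1 \<le> p"
    and "conv_banach_algebra multG invG muG w1 p"
    and "conv_banach_algebra multH invH muH w2 p"
    and "algebra_iso multG invG muG w1 multH invH muH w2 p T"
    and "bipositive muG w1 muH w2 p T \<or> (isometry_lp muG w1 muH w2 p T \<and> p \<noteq> 2)"
  shows "bicontinuous muG w1 muH w2 p T \<and> biseparating muG w1 muH w2 p T"
proof -
  interpret Lp_iso muG w1 muH w2 p T
    using assms(1,2,3,6) by (rule Lp_iso_if_algebra_iso)
  from assms(7) show ?thesis
  proof
    assume "bipositive muG w1 muH w2 p T"
    then interpret bipositive_Lp_iso muG w1 muH w2 p T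
      by unfold_locales (auto simp: bipositive_def)
    show ?thesis
      using bicontinuous_map biseparating_map ..
  next
    assume "isometry_lp muG w1 muH w2 p T \<and> p \<noteq> 2"
    then show ?thesis
      using isometry_bicontinuous isometry_biseparating by blast
  qed
qed

end
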